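(* Let $G$ be a $\lambda$-graph and $Q$ a query over $G$. If there exists a sharing equivalence on $G$ containing $Q$, then the spreading $Q^{\#}$ is the smallest sharing equivalence on $G$ containing $Q$.
   Context: A pre-$\lambda$-graph is a directed graph whose nodes are of four kinds: an application node $@(n_1,n_2)$ has exactly two children, its left child $n_1$ and its right child $n_2$; an abstraction node $\lambda(n)$ has exactly one child, its body $n$; a free variable node has no children and carries an atom $\mathrm{id}(n)$ from a fixed set of atoms, distinct free variable nodes carrying distinct atoms; a bound variable node $\mathrm{var}(l)$ has exactly one outgoing binding edge, to an abstraction node $l$ (its binder). Letters $l,l'$ denote abstraction nodes. A trace is a finite sequence of directions from $\{\swarrow,\downarrow,\searrow\}$; $\epsilon$ is the empty trace and $d\cdot\tau$ is the trace $\tau$ extended by one final step $d$. Paths $n\xrightarrow{\tau}m$ are defined inductively: $n\xrightarrow{\epsilon}n$; if $n\xrightarrow{\tau}\lambda(m)$ then $n\xrightarrow{\downarrow\cdot\tau}m$; if $n\xrightarrow{\tau}@(m_1,m_2)$ then $n\xrightarrow{\swarrow\cdot\tau}m_1$ and $n\xrightarrow{\searrow\cdot\tau}m_2$ (binding edges are never followed). We write $n\xrightarrow{\tau}$ if $n\xrightarrow{\tau}m$ for some $m$. The path $n\xrightarrow{\tau}$ crosses a node $m$ if either $n\xrightarrow{\tau}m$, or $\tau=d\cdot\tau'$ and $n\xrightarrow{\tau'}$ crosses $m$. A root is a node $r$ such that the only path ending in $r$ has the empty trace. A node $m$ dominates $n$ if every path from a root to $n$ crosses $m$. A $\lambda$-graph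 is a pre-$\lambda$-graph that has finitely many nodes, is acyclic ($n\xrightarrow{\tau}n$ holds only for $\tau=\epsilon$), and is dominated (every bound variable node $\mathrm{var}(l)$ is dominated by its binder $l$). Two nodes are homogeneous if both are application nodes, or both abstraction nodes, or both free variable nodes, or both bound variable nodes; a binary relation $R$ on nodes is homogeneous if it only relates homogeneous nodes. Rules: $(\swarrow)$: $@(n_1,n_2)\,R\,@(m_1,m_2)$ implies $n_1\,R\,m_1$; $(\searrow)$: $@(n_1,n_2)\,R\,@(m_1,m_2)$ implies $n_2\,R\,m_2$; $(\downarrow)$: $\lambda(n)\,R\,\lambda(m)$ implies $n\,R\,m$; $(\circlearrowright)$: $\mathrm{var}(n)\,R\,\mathrm{var}(m)$ implies $n\,R\,m$. $R$ is propagated if closed under $(\swarrow),(\downarrow),(\searrow)$. $R$ is open if $n\,R\,m$ implies $n=m$ for all free variable nodes $n,m$. A blind bisimulation is a homogeneous propagated relation; a bisimulation is a blind bisimulation closed also under $(\circlearrowright)$. A blind sharing equivalence is a blind bisimulation that is an equivalence relation; a sharing equivalence is an open bisimulation that is an equivalence relation. $R^*$ denotes the reflexive–symmetric–transitive closure of $R$; $R^{\Downarrow}$ (propagation) is the smallest propagated relation containing $R$; $R^{\#}$ (spreading) is the smallest propagated equivalence relation containing $R$. A query over $G$ is a binary relation on the roots of $G$. *)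

theory Defs
  imports Main
begin

text \<open>Node labels: application, abstraction, free variable (carrying an atom),
  bound variable (carrying its binding edge to an abstraction node).\<close>
datatype ('n, 'a) node = App 'n 'n | Lam 'n | FVar 'a | BVar 'n

record ('n, 'a) lgraph =
  nodes :: "'n set"
  lab   :: "'n \<Rightarrow> ('n, 'a) node"

definition is_lam :: "('n, 'a) node \<Rightarrow> bool" where
  "is_lam k \<longleftrightarrow> (\<exists>b. k = Lam b)"

definition pre_lgraph :: "('n, 'a) lgraph \<Rightarrow> bool" where
  "pre_lgraph G \<longleftrightarrow>
     (\<forall>n \<in> nodes G.
        (\<forall>n1 n2. lab G n = App n1 n2 \<longrightarrow> n1 \<in> nodes G \<and> n2 \<in> nodes G) \<and>
        (\<forall>b. lab G n = Lam b \<longrightarrow> b \<in> nodes G) \<and>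
        (\<forall>l. lab G n = BVar l \<longrightarrow> l \<in> nodes G \<and> is_lam (lab G l))) \<and>
     (\<forall>n \<in> nodes G. \<forall>m \<in> nodes G. \<forall>a.
        lab G n = FVar a \<and> lab G m = FVar a \<longrightarrow> n = m)"

text \<open>Directions and traces. A trace is a list whose head is the LAST step:
  \<open>d # \<tau>\<close> is the trace \<open>\<tau>\<close> extended by the final step \<open>d\<close>.\<close>
datatype dir = DLeft | DDown | DRight

type_synonym trace = "dir list"

inductive path :: "('n, 'a) lgraph \<Rightarrow> 'n \<Rightarrow> trace \<Rightarrow> 'n \<Rightarrow> bool" for G where
  path_nil:   "n \<in> nodes G \<Longrightarrow> path G n [] n"
| path_down:  "path G n \<tau> m \<Longrightarrow> lab G m = Lam m' \<Longrightarrow> path G n (DDown # \<tau>) m'"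
| path_left:  "path G n \<tau> m \<Longrightarrow> lab G m = App m1 m2 \<Longrightarrow> path G n (DLeft # \<tau>) m1"
| path_right: "path G n \<tau> m \<Longrightarrow> lab G m = App m1 m2 \<Longrightarrow> path G n (DRight # \<tau>) m2"

fun crosses :: "('n, 'a) lgraph \<Rightarrow> 'n \<Rightarrow> trace \<Rightarrow> 'n \<Rightarrow> bool" where
  "crosses G n [] m = path G n [] m"
| "crosses G n (d # \<tau>) m = (path G n (d # \<tau>) m \<or> crosses G n \<tau> m)"

definition is_root :: "('n, 'a) lgraph \<Rightarrow> 'n \<Rightarrow> bool" where
  "is_root G r \<longleftrightarrow> r \<in> nodes G \<and> (\<forall>n \<tau>. path G n \<tau> r \<longrightarrow> \<tau> = [])"

definition dominates :: "('n, 'a) lgraph \<Rightarrow> 'n \<Rightarrow> 'n \<Rightarrow> bool" where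
  "dominates G m n \<longleftrightarrow> (\<forall>r \<tau>. is_root G r \<longrightarrow> path G r \<tau> n \<longrightarrow> crosses G r \<tau> m)"

definition lambda_graph :: "('n, 'a) lgraph \<Rightarrow> bool" where
  "lambda_graph G \<longleftrightarrow> pre_lgraph G \<and> finite (nodes G) \<and>
     (\<forall>n \<tau>. path G n \<tau> n \<longrightarrow> \<tau> = []) \<and>
     (\<forall>n \<in> nodes G. \<forall>l. lab G n = BVar l \<longrightarrow> dominates G l n)"

fun homog :: "('n, 'a) node \<Rightarrow> ('n, 'a) node \<Rightarrow> bool" where
  "homog (App _ _) (App _ _) = True"
| "homog (Lam _) (Lam _) = True"
| "homog (FVar _) (FVar _) = True"
| "homog (BVar _) (BVar _) = True"
| "homog _ _ = False"

definition homogeneous :: "('n, 'a) lgraph \<Rightarrow> 'n rel \<Rightarrow> bool" where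
  "homogeneous G R \<longleftrightarrow> (\<forall>(n, m) \<in> R. homog (lab G n) (lab G m))"

definition propagated :: "('n, 'a) lgraph \<Rightarrow> 'n rel \<Rightarrow> bool" where
  "propagated G R \<longleftrightarrow> (\<forall>(n, m) \<in> R.
     (\<forall>n1 n2 m1 m2. lab G n = App n1 n2 \<and> lab G m = App m1 m2 \<longrightarrow>
         (n1, m1) \<in> R \<and> (n2, m2) \<in> R) \<and>
     (\<forall>n' m'. lab G n = Lam n' \<and> lab G m = Lam m' \<longrightarrow> (n', m') \<in> R))"

definition var_closed :: "('n, 'a) lgraph \<Rightarrow> 'n rel \<Rightarrow> bool" where
  "var_closed G R \<longleftrightarrow> (\<forall>(n, m) \<in> R. \<forall>l l'.
     lab G n = BVar l \<and> lab G m = BVar l' \<longrightarrow> (l, l') \<in> R)"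

definition open_rel :: "('n, 'a) lgraph \<Rightarrow> 'n rel \<Rightarrow> bool" where
  "open_rel G R \<longleftrightarrow> (\<forall>(n, m) \<in> R. \<forall>a b.
     lab G n = FVar a \<and> lab G m = FVar b \<longrightarrow> n = m)"

definition blind_bisim :: "('n, 'a) lgraph \<Rightarrow> 'n rel \<Rightarrow> bool" where
  "blind_bisim G R \<longleftrightarrow> homogeneous G R \<and> propagated G R"

definition bisim :: "('n, 'a) lgraph \<Rightarrow> 'n rel \<Rightarrow> bool" where
  "bisim G R \<longleftrightarrow> blind_bisim G R \<and> var_closed G R"

definition sharing_equiv :: "('n, 'a) lgraph \<Rightarrow> 'n rel \<Rightarrow> bool" where
  "sharing_equiv G R \<longleftrightarrow> open_rel G R \<and> bisim G R \<and> equiv (nodes G) R"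

definition spreading :: "('n, 'a) lgraph \<Rightarrow> 'n rel \<Rightarrow> 'n rel" where
  "spreading G Q = \<Inter> {R. equiv (nodes G) R \<and> propagated G R \<and> Q \<subseteq> R}"

definition is_query :: "('n, 'a) lgraph \<Rightarrow> 'n rel \<Rightarrow> bool" where
  "is_query G Q \<longleftrightarrow> (\<forall>(r, s) \<in> Q. is_root G r \<and> is_root G s)"

end

theory Submission
  imports Defs "HOL-Library.Sublist"
begin

text \<open>The spreading \<open>Q\<^sup>#\<close> is the equivalence closure of the propagation \<open>Q\<^sup>\<Down>\<close>, the pairs
  reached from \<open>Q\<close> along a common trace, as soon as \<open>Q\<^sup>\<Down>\<close> is homogeneous; it is, being
  contained in a sharing equivalence \<open>R \<supseteq> Q\<close>. Equivalence closure preserves homogeneity,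
  propagation and closure under binding edges, so it remains to show that \<open>Q\<^sup>\<Down>\<close> is closed
  under binding edges. Let bound variables \<open>n\<close>, \<open>m\<close> be reached from roots \<open>r\<close>, \<open>s\<close> with
  \<open>(r, s) \<in> Q\<close> along a trace \<open>\<tau>\<close>. Since binders dominate their variables, the binders \<open>l\<close>,
  \<open>l'\<close> lie on these paths, at suffixes \<open>\<tau>\<^sub>1\<close>, \<open>\<tau>\<^sub>2\<close> of \<open>\<tau>\<close>. If, say, \<open>\<tau>\<^sub>2\<close> were strictly longer, the
  node \<open>x\<close> reached from \<open>s\<close> along \<open>\<tau>\<^sub>1\<close> would satisfy \<open>x R l R l'\<close> with \<open>l'\<close> a proper
  descendant of \<open>x\<close>; transporting this descent along \<open>R\<close> over and over gives an infinite
  path in the finite acyclic graph. So \<open>\<tau>\<^sub>1 = \<tau>\<^sub>2\<close> and \<open>(l, l') \<in> Q\<^sup>\<Down>\<close>.\<close>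

fun child :: "('n, 'a) lgraph \<Rightarrow> dir \<Rightarrow> 'n \<Rightarrow> 'n \<Rightarrow> bool" where
  "child G DDown n k \<longleftrightarrow> lab G n = Lam k"
| "child G DLeft n k \<longleftrightarrow> (\<exists>k'. lab G n = App k k')"
| "child G DRight n k \<longleftrightarrow> (\<exists>k'. lab G n = App k' k)"

lemma path_Nil_iff: "path G n [] k \<longleftrightarrow> n \<in> nodes G \<and> k = n"
  by (auto elim: path.cases intro: path_nil)

lemma path_Cons_iff: "path G n (d # \<tau>) k \<longleftrightarrow> (\<exists>m. path G n \<tau> m \<and> child G d m k)"
proof
  assume "path G n (d # \<tau>) k"
  then show "\<exists>m. path G n \<tau> m \<and> child G d m k" by (cases rule: path.cases) auto
next
  assume "\<exists>m. path G n \<tau> m \<and> child G d m k"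
  then show "path G n (d # \<tau>) k" by (cases d) (auto intro: path.intros)
qed

lemma child_deterministic: "child G d n n' \<Longrightarrow> child G d n n'' \<Longrightarrow> n' = n''"
  by (cases d) auto

lemma path_source_in_nodes: "path G n \<tau> m \<Longrightarrow> n \<in> nodes G"
  by (induction rule: path.induct) auto

lemma path_target_in_nodes:
  assumes "pre_lgraph G" and "path G n \<tau> m"
  shows "m \<in> nodes G"
  using assms(2) by (induction rule: path.induct) (use assms(1) in \<open>unfold pre_lgraph_def, blast+\<close>)

lemma child_in_nodes:
  assumes "pre_lgraph G" and "n \<in> nodes G" and "child G d n n'"
  shows "n' \<in> nodes G"
proof -
  have "\<forall>n1 n2. lab G n = App n1 n2 \<longrightarrow> n1 \<in> nodes G \<and> n2 \<in> nodes G"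
    and "\<forall>b. lab G n = Lam b \<longrightarrow> b \<in> nodes G"
    using assms(1,2) unfolding pre_lgraph_def by blast+
  with assms(3) show ?thesis by (cases d) auto
qed

lemma path_append: "path G m \<sigma> k \<Longrightarrow> path G n \<tau> m \<Longrightarrow> path G n (\<sigma> @ \<tau>) k"
  by (induction rule: path.induct) (auto intro: path.intros)

lemma path_appendE:
  assumes "pre_lgraph G" and "path G n (\<sigma> @ \<tau>) k"
  obtains m where "path G n \<tau> m" and "path G m \<sigma> k"
  using assms(2)
proof (induction \<sigma> arbitrary: k thesis)
  case Nil
  then show ?case using path_target_in_nodes[OF assms(1)] by (auto simp: path_Nil_iff)
next
  case (Cons d \<sigma>)
  then obtain k' where "path G n (\<sigma> @ \<tau>) k'" and "child G d k' k"
    by (auto simp: path_Cons_iff)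
  with Cons.IH show ?case by (metis Cons.prems(1) path_Cons_iff)
qed

lemma path_power:
  assumes "\<And>k. path G (z k) \<sigma> (z (Suc k))"
  shows "path G (z i) (concat (replicate d \<sigma>)) (z (i + d))"
proof (induction d)
  case 0
  then show ?case using path_source_in_nodes[OF assms] by (simp add: path_nil)
next
  case (Suc d)
  then show ?case using path_append[OF assms(1)[of "i + d"]] by simp
qed

lemma crosses_imp_path_suffix: "crosses G n \<tau> m \<Longrightarrow> \<exists>\<tau>'. suffix \<tau>' \<tau> \<and> path G n \<tau>' m"
  by (induction \<tau>) (auto intro: suffix_ConsI)

section \<open>Bisimulations do not relate a node to a descendant\<close>

lemma homogeneous_child_agree:
  assumes "homogeneous G R" and "(n, m) \<in> R"
  shows "(\<exists>n'. child G d n n') \<longleftrightarrow> (\<exists>m'. child G d m m')"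
  using assms unfolding homogeneous_def by (cases d; cases "lab G n"; cases "lab G m") auto

lemma propagated_child:
  assumes "propagated G R" and "(n, m) \<in> R" and "child G d n n'" and "child G d m m'"
  shows "(n', m') \<in> R"
  using assms by (cases d) (auto simp: propagated_def)

lemma blind_bisim_child:
  assumes "blind_bisim G R" and "(n, m) \<in> R" and "child G d n n'"
  obtains m' where "child G d m m'" and "(n', m') \<in> R"
  using assms homogeneous_child_agree propagated_child unfolding blind_bisim_def by metis

lemma blind_bisim_path_transfer:
  assumes "blind_bisim G R" and "(n, m) \<in> R" and "m \<in> nodes G"
  shows "path G n \<sigma> n' \<Longrightarrow> \<exists>m'. path G m \<sigma> m' \<and> (n', m') \<in> R"
proof (induction \<sigma> arbitrary: n')
  case Nil
  then show ?case using assms(2,3) by (auto simp: path_Nil_iff)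
next
  case (Cons d \<sigma>)
  then obtain x where "path G n \<sigma> x" and "child G d x n'" by (auto simp: path_Cons_iff)
  moreover from this obtain y where "path G m \<sigma> y" and "(x, y) \<in> R" using Cons.IH by blast
  ultimately obtain y' where "child G d y y'" and "(n', y') \<in> R"
    using blind_bisim_child[OF assms(1)] by blast
  with \<open>path G m \<sigma> y\<close> show ?case unfolding path_Cons_iff by blast
qed

lemma lambda_graph_no_infinite_descent:
  assumes "lambda_graph G" and steps: "\<And>k. path G (z k) \<sigma> (z (Suc k))"
  shows "\<sigma> = []"
proof -
  have fin: "finite (nodes G)" and acyclic: "\<And>n \<tau>. path G n \<tau> n \<Longrightarrow> \<tau> = []"
    using assms(1) by (simp_all add: lambda_graph_def)
  have "range z \<subseteq> nodes G" using path_source_in_nodes[OF steps] by auto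
  then have "finite (range z)" using fin finite_subset by blast
  then have "\<not> inj z" using finite_imageD infinite_UNIV_nat by blast
  then obtain i j where "i < j" and "z i = z j"
    unfolding inj_def by (metis linorder_neqE_nat)
  then have "path G (z i) (concat (replicate (j - i) \<sigma>)) (z i)"
    using path_power[where z = z, OF steps, of i "j - i"] by simp
  then have "concat (replicate (j - i) \<sigma>) = []" by (rule acyclic)
  moreover obtain d where "j - i = Suc d" using \<open>i < j\<close> not0_implies_Suc by fastforce
  ultimately show ?thesis by simp
qed

lemma blind_bisim_related_not_descendant:
  assumes "lambda_graph G" and "blind_bisim G R" and "(u, v) \<in> R" and "path G u \<sigma> v"
  shows "\<sigma> = []"
proof -
  have pre: "pre_lgraph G" using assms(1) by (simp add: lambda_graph_def)
  have "\<exists>z. \<forall>k. (\<exists>a. path G a \<sigma> (z k) \<and> (a, z k) \<in> R) \<and> path G (z k) \<sigma> (z (Suc k))"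
  proof (rule dependent_nat_choice)
    show "\<exists>b a. path G a \<sigma> b \<and> (a, b) \<in> R" using assms(3,4) by blast
  next
    fix b :: 'a and k
    assume "\<exists>a. path G a \<sigma> b \<and> (a, b) \<in> R"
    then obtain a where a: "path G a \<sigma> b" "(a, b) \<in> R" by blast
    then show "\<exists>c. (\<exists>a. path G a \<sigma> c \<and> (a, c) \<in> R) \<and> path G b \<sigma> c"
      using blind_bisim_path_transfer[OF assms(2) a(2) path_target_in_nodes[OF pre a(1)] a(1)] by blast
  qed
  then obtain z where "\<And>k. path G (z k) \<sigma> (z (Suc k))" by blast
  then show ?thesis by (rule lambda_graph_no_infinite_descent[OF assms(1)])
qed

lemma propagated_path_pairs:
  assumes "propagated G R" and "(r, s) \<in> R"
  shows "path G r \<tau> n \<Longrightarrow> path G s \<tau> m \<Longrightarrow> (n, m) \<in> R"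
proof (induction \<tau> arbitrary: n m)
  case Nil
  then show ?case using assms(2) by (simp add: path_Nil_iff)
next
  case (Cons d \<tau>)
  then show ?case using propagated_child[OF assms(1)] by (meson path_Cons_iff)
qed

text \<open>For \<open>Q\<close> relating nodes of \<open>G\<close>, this is the paper's propagation \<open>Q\<^sup>\<Down>\<close>.\<close>
definition propagation :: "('n, 'a) lgraph \<Rightarrow> 'n rel \<Rightarrow> 'n rel" where
  "propagation G Q = {(n, m). \<exists>r s \<tau>. (r, s) \<in> Q \<and> path G r \<tau> n \<and> path G s \<tau> m}"

lemma propagation_child:
  assumes "(n, m) \<in> propagation G Q" and "child G d n n'" and "child G d m m'"
  shows "(n', m') \<in> propagation G Q"
proof -
  obtain r s \<tau> where "(r, s) \<in> Q" and "path G r \<tau> n" and "path G s \<tau> m"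
    using assms(1) unfolding propagation_def by blast
  then have "path G r (d # \<tau>) n'" and "path G s (d # \<tau>) m'"
    using assms(2,3) unfolding path_Cons_iff by blast+
  with \<open>(r, s) \<in> Q\<close> show ?thesis unfolding propagation_def by blast
qed

lemma propagated_propagation: "propagated G (propagation G Q)"
  unfolding propagated_def
  by (auto intro: propagation_child[where d = DLeft] propagation_child[where d = DRight]
      propagation_child[where d = DDown])

lemma subset_propagation: "Q \<subseteq> nodes G \<times> nodes G \<Longrightarrow> Q \<subseteq> propagation G Q"
  unfolding propagation_def by (blast intro: path_nil)

lemma propagation_subset:
  assumes "propagated G R" and "Q \<subseteq> R"
  shows "propagation G Q \<subseteq> R"
proof clarify
  fix n m assume "(n, m) \<in> propagation G Q"
  then obtain r s \<tau> where "(r, s) \<in> Q" and "path G r \<tau> n" and "path G s \<tau> m"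
    unfolding propagation_def by blast
  then show "(n, m) \<in> R" using propagated_path_pairs[OF assms(1)] assms(2) by blast
qed

lemma propagation_subset_nodes:
  assumes "pre_lgraph G"
  shows "propagation G Q \<subseteq> nodes G \<times> nodes G"
  unfolding propagation_def using path_target_in_nodes[OF assms] by blast

section \<open>Equivalence closure\<close>

text \<open>The closure \<open>R\<^sup>*\<close> of the paper, taken reflexively on the node set \<open>A\<close> only.\<close>
definition equiv_closure :: "'a set \<Rightarrow> 'a rel \<Rightarrow> 'a rel" where
  "equiv_closure A R = Id_on A \<union> (R \<union> R\<inverse>)\<^sup>+"

lemma subset_equiv_closure: "R \<subseteq> equiv_closure A R"
  unfolding equiv_closure_def by (blast intro: r_into_trancl')

lemma equiv_equiv_closure:
  assumes "R \<subseteq> A \<times> A"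
  shows "equiv A (equiv_closure A R)"
proof (rule equivI)
  have "(R \<union> R\<inverse>)\<^sup>+ \<subseteq> A \<times> A" using assms by (intro trancl_subset_Sigma) auto
  then show "equiv_closure A R \<subseteq> A \<times> A" and "refl_on A (equiv_closure A R)"
    unfolding equiv_closure_def refl_on_def by blast+
  show "sym (equiv_closure A R)"
    unfolding equiv_closure_def by (intro sym_Un sym_Id_on sym_trancl sym_Un_converse)
  show "trans (equiv_closure A R)"
    unfolding equiv_closure_def trans_def
  proof (intro allI impI)
    fix x y z assume "(x, y) \<in> Id_on A \<union> (R \<union> R\<inverse>)\<^sup>+" "(y, z) \<in> Id_on A \<union> (R \<union> R\<inverse>)\<^sup>+"
    then show "(x, z) \<in> Id_on A \<union> (R \<union> R\<inverse>)\<^sup>+"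
      by (elim UnE) (auto dest: trancl_trans)
  qed
qed

lemma equiv_closure_least:
  assumes "Id_on A \<subseteq> S" and "sym S" and "trans S" and "R \<subseteq> S"
  shows "equiv_closure A R \<subseteq> S"
proof -
  have "R \<union> R\<inverse> \<subseteq> S" using assms(2,4) by (auto simp: sym_conv_converse_eq)
  then have "(R \<union> R\<inverse>)\<^sup>+ \<subseteq> S"
    using trancl_mono[of _ "R \<union> R\<inverse>" S] trancl_id[OF assms(3)] by blast
  with assms(1) show ?thesis unfolding equiv_closure_def by blast
qed

lemma homog_refl: "homog x x"
  by (cases x) auto

lemma homog_sym: "homog x y \<Longrightarrow> homog y x"
  by (cases x; cases y) auto

lemma homog_trans: "homog x y \<Longrightarrow> homog y z \<Longrightarrow> homog x z"
  by (cases x; cases y; cases z) auto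

lemma homogeneous_equiv_closure:
  assumes "homogeneous G R"
  shows "homogeneous G (equiv_closure A R)"
proof -
  let ?H = "{(n, m). homog (lab G n) (lab G m)}"
  have "equiv_closure A R \<subseteq> ?H"
  proof (rule equiv_closure_least)
    show "Id_on A \<subseteq> ?H" by (auto simp: homog_refl)
    show "sym ?H" by (auto simp: sym_def homog_sym)
    show "trans ?H" by (auto simp: trans_def intro: homog_trans)
    show "R \<subseteq> ?H" using assms by (auto simp: homogeneous_def)
  qed
  then show ?thesis unfolding homogeneous_def by blast
qed

definition closed_under :: "('n \<Rightarrow> 'n \<Rightarrow> bool) \<Rightarrow> 'n rel \<Rightarrow> bool" where
  "closed_under E R \<longleftrightarrow> (\<forall>(n, m) \<in> R. \<forall>n' m'. E n n' \<longrightarrow> E m m' \<longrightarrow> (n', m') \<in> R)"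

lemma closed_under_Un: "closed_under E R \<Longrightarrow> closed_under E S \<Longrightarrow> closed_under E (R \<union> S)"
  unfolding closed_under_def by blast

lemma closed_under_converse: "closed_under E R \<Longrightarrow> closed_under E (R\<inverse>)"
  unfolding closed_under_def by blast

lemma closed_under_Id_on:
  assumes "\<And>n n'. n \<in> A \<Longrightarrow> E n n' \<Longrightarrow> n' \<in> A" and "\<And>n n' n''. E n n' \<Longrightarrow> E n n'' \<Longrightarrow> n' = n''"
  shows "closed_under E (Id_on A)"
  using assms unfolding closed_under_def by blast

text \<open>The second hypothesis lets a step taken at both ends of a chain be taken at every
  intermediate node as well.\<close>
lemma closed_under_trancl:
  assumes "closed_under E R" and "\<And>n m. (n, m) \<in> R \<Longrightarrow> (\<exists>n'. E n n') \<longleftrightarrow> (\<exists>m'. E m m')"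
  shows "closed_under E (R\<^sup>+)"
proof -
  have "(x', z') \<in> R\<^sup>+" if "(x, z) \<in> R\<^sup>+" and "E x x'" and "E z z'" for x z x' z'
    using that
  proof (induction arbitrary: z' rule: trancl_induct)
    case (base z)
    then show ?case using assms(1) unfolding closed_under_def by blast
  next
    case (step y z)
    obtain y' where "E y y'" using assms(2)[OF step.hyps(2)] step.prems(2) by blast
    then have "(x', y') \<in> R\<^sup>+" using step.IH step.prems(1) by blast
    moreover have "(y', z') \<in> R"
      using assms(1) step.hyps(2) \<open>E y y'\<close> step.prems(2) unfolding closed_under_def by blast
    ultimately show ?case by (rule trancl_into_trancl)
  qed
  then show ?thesis unfolding closed_under_def by blast
qed

lemma closed_under_equiv_closure:
  assumes "closed_under E R"
    and "\<And>n m. (n, m) \<in> R \<Longrightarrow> (\<exists>n'. E n n') \<longleftrightarrow> (\<exists>m'. E m m')"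
    and "\<And>n n'. n \<in> A \<Longrightarrow> E n n' \<Longrightarrow> n' \<in> A"
    and "\<And>n n' n''. E n n' \<Longrightarrow> E n n'' \<Longrightarrow> n' = n''"
  shows "closed_under E (equiv_closure A R)"
proof -
  have "closed_under E (Id_on A)" using assms(3,4) by (rule closed_under_Id_on)
  moreover have "closed_under E ((R \<union> R\<inverse>)\<^sup>+)"
  proof (rule closed_under_trancl)
    show "closed_under E (R \<union> R\<inverse>)" using assms(1) by (intro closed_under_Un closed_under_converse)
    show "(\<exists>n'. E n n') \<longleftrightarrow> (\<exists>m'. E m m')" if "(n, m) \<in> R \<union> R\<inverse>" for n m
      using that assms(2) by blast
  qed
  ultimately show ?thesis unfolding equiv_closure_def by (rule closed_under_Un)
qed

lemma propagated_iff_closed_under_child: "propagated G R \<longleftrightarrow> (\<forall>d. closed_under (child G d) R)"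
proof
  assume "propagated G R"
  then show "\<forall>d. closed_under (child G d) R"
    unfolding closed_under_def by (auto intro: propagated_child)
next
  assume "\<forall>d. closed_under (child G d) R"
  then have "closed_under (child G DLeft) R" and "closed_under (child G DRight) R"
    and "closed_under (child G DDown) R" by blast+
  then show "propagated G R"
    unfolding propagated_def closed_under_def by auto
qed

lemma var_closed_iff_closed_under: "var_closed G R \<longleftrightarrow> closed_under (\<lambda>n l. lab G n = BVar l) R"
  unfolding var_closed_def closed_under_def by blast

lemma homogeneous_BVar_agree:
  assumes "homogeneous G R" and "(n, m) \<in> R"
  shows "(\<exists>l. lab G n = BVar l) \<longleftrightarrow> (\<exists>l'. lab G m = BVar l')"
  using assms unfolding homogeneous_def by (cases "lab G n"; cases "lab G m") auto

lemma propagated_equiv_closure: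
  assumes "pre_lgraph G" and "homogeneous G R" and "propagated G R"
  shows "propagated G (equiv_closure (nodes G) R)"
proof -
  have "closed_under (child G d) (equiv_closure (nodes G) R)" for d
  proof (rule closed_under_equiv_closure)
    show "closed_under (child G d) R"
      using assms(3) unfolding propagated_iff_closed_under_child by blast
    show "(\<exists>n'. child G d n n') \<longleftrightarrow> (\<exists>m'. child G d m m')" if "(n, m) \<in> R" for n m
      using assms(2) that by (rule homogeneous_child_agree)
    show "n' \<in> nodes G" if "n \<in> nodes G" and "child G d n n'" for n n'
      using assms(1) that by (rule child_in_nodes)
    show "n' = n''" if "child G d n n'" and "child G d n n''" for n n' n''
      using that by (rule child_deterministic)
  qed
  then show ?thesis unfolding propagated_iff_closed_under_child by blast
qed

lemma var_closed_equiv_closure: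
  assumes "pre_lgraph G" and "homogeneous G R" and "var_closed G R"
  shows "var_closed G (equiv_closure (nodes G) R)"
  unfolding var_closed_iff_closed_under
proof (rule closed_under_equiv_closure)
  show "closed_under (\<lambda>n l. lab G n = BVar l) R"
    using assms(3) unfolding var_closed_iff_closed_under .
  show "(\<exists>l. lab G n = BVar l) \<longleftrightarrow> (\<exists>l'. lab G m = BVar l')" if "(n, m) \<in> R" for n m
    using assms(2) that by (rule homogeneous_BVar_agree)
  show "l \<in> nodes G" if "n \<in> nodes G" and "lab G n = BVar l" for n l
    using assms(1) that unfolding pre_lgraph_def by blast
qed simp

lemma bisim_equiv_closure:
  assumes "pre_lgraph G" and "bisim G R"
  shows "bisim G (equiv_closure (nodes G) R)"
  using assms homogeneous_equiv_closure propagated_equiv_closure var_closed_equiv_closure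
  unfolding bisim_def blind_bisim_def by blast

lemma spreading_least: "equiv (nodes G) R \<Longrightarrow> propagated G R \<Longrightarrow> Q \<subseteq> R \<Longrightarrow> spreading G Q \<subseteq> R"
  unfolding spreading_def by blast

lemma spreading_eq_equiv_closure_propagation:
  assumes "pre_lgraph G" and "Q \<subseteq> nodes G \<times> nodes G" and "homogeneous G (propagation G Q)"
  shows "spreading G Q = equiv_closure (nodes G) (propagation G Q)"
proof
  have "equiv (nodes G) (equiv_closure (nodes G) (propagation G Q))"
    using propagation_subset_nodes[OF assms(1)] by (rule equiv_equiv_closure)
  moreover have "propagated G (equiv_closure (nodes G) (propagation G Q))"
    using assms(1,3) propagated_propagation by (rule propagated_equiv_closure)
  moreover have "Q \<subseteq> equiv_closure (nodes G) (propagation G Q)"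
    using subset_propagation[OF assms(2)] subset_equiv_closure by blast
  ultimately show "spreading G Q \<subseteq> equiv_closure (nodes G) (propagation G Q)"
    by (rule spreading_least)
  show "equiv_closure (nodes G) (propagation G Q) \<subseteq> spreading G Q"
    unfolding spreading_def
  proof (rule Inter_greatest)
    fix R assume "R \<in> {R. equiv (nodes G) R \<and> propagated G R \<and> Q \<subseteq> R}"
    then show "equiv_closure (nodes G) (propagation G Q) \<subseteq> R"
      by (intro equiv_closure_least propagation_subset) (auto simp: equiv_def refl_on_def)
  qed
qed

lemma bisim_binders_same_trace:
  assumes "lambda_graph G" and "bisim G R" and "sym R" and "trans R" and "(r, s) \<in> R"
    and "path G r \<tau> n" and "path G s \<tau> m" and "lab G n = BVar l" and "lab G m = BVar l'"
    and "path G r \<tau>' l" and "path G s (\<sigma> @ \<tau>') l'"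
  shows "\<sigma> = []"
proof -
  have "pre_lgraph G" using assms(1) by (simp add: lambda_graph_def)
  have blind: "blind_bisim G R" and propagated: "propagated G R" and "var_closed G R"
    using assms(2) by (auto simp: bisim_def blind_bisim_def)
  obtain x where "path G s \<tau>' x" and "path G x \<sigma> l'"
    using path_appendE[OF \<open>pre_lgraph G\<close> assms(11)] .
  have "(l, x) \<in> R" using propagated_path_pairs[OF propagated assms(5,10) \<open>path G s \<tau>' x\<close>] .
  moreover have "(n, m) \<in> R" using propagated_path_pairs[OF propagated assms(5,6,7)] .
  then have "(l, l') \<in> R" using \<open>var_closed G R\<close> assms(8,9) unfolding var_closed_def by blast
  ultimately have "(x, l') \<in> R" using assms(3,4) unfolding sym_def trans_def by blast
  then show ?thesis using blind_bisim_related_not_descendant[OF assms(1) blind _ \<open>path G x \<sigma> l'\<close>] by blast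
qed

lemma var_closed_propagation:
  assumes "lambda_graph G" and "is_query G Q" and "bisim G R" and "sym R" and "trans R"
    and "Q \<subseteq> R"
  shows "var_closed G (propagation G Q)"
  unfolding var_closed_def
proof clarify
  fix n m l l' assume "(n, m) \<in> propagation G Q" and n: "lab G n = BVar l" and m: "lab G m = BVar l'"
  then obtain r s \<tau> where "(r, s) \<in> Q" and r: "path G r \<tau> n" and s: "path G s \<tau> m"
    unfolding propagation_def by blast
  have "pre_lgraph G" using assms(1) by (simp add: lambda_graph_def)
  have "dominates G l n" and "dominates G l' m"
    using assms(1) n m path_target_in_nodes[OF \<open>pre_lgraph G\<close> r] path_target_in_nodes[OF \<open>pre_lgraph G\<close> s]
    unfolding lambda_graph_def by blast+
  moreover have "is_root G r" and "is_root G s" using assms(2) \<open>(r, s) \<in> Q\<close> unfolding is_query_def by blast+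
  ultimately have "crosses G r \<tau> l" and "crosses G s \<tau> l'" using r s unfolding dominates_def by blast+
  then obtain \<tau>1 \<tau>2 where "suffix \<tau>1 \<tau>" and l: "path G r \<tau>1 l" and "suffix \<tau>2 \<tau>" and l': "path G s \<tau>2 l'"
    using crosses_imp_path_suffix by metis
  have "(r, s) \<in> R" and "(s, r) \<in> R" using \<open>(r, s) \<in> Q\<close> assms(4,6) unfolding sym_def by blast+
  from \<open>suffix \<tau>1 \<tau>\<close> \<open>suffix \<tau>2 \<tau>\<close> consider "suffix \<tau>1 \<tau>2" | "suffix \<tau>2 \<tau>1"
    using suffix_same_cases by blast
  then show "(l, l') \<in> propagation G Q"
  proof cases
    case 1
    then obtain \<sigma> where "\<tau>2 = \<sigma> @ \<tau>1" unfolding suffix_def by blast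
    with l' have "path G s (\<sigma> @ \<tau>1) l'" by simp
    moreover from this have "\<sigma> = []"
      by (rule bisim_binders_same_trace[OF assms(1,3,4,5) \<open>(r, s) \<in> R\<close> r s n m l])
    ultimately have "path G s \<tau>1 l'" by simp
    with \<open>(r, s) \<in> Q\<close> l show ?thesis unfolding propagation_def by blast
  next
    case 2
    then obtain \<sigma> where "\<tau>1 = \<sigma> @ \<tau>2" unfolding suffix_def by blast
    with l have "path G r (\<sigma> @ \<tau>2) l" by simp
    moreover from this have "\<sigma> = []"
      by (rule bisim_binders_same_trace[OF assms(1,3,4,5) \<open>(s, r) \<in> R\<close> s r m n l'])
    ultimately have "path G r \<tau>2 l" by simp
    with \<open>(r, s) \<in> Q\<close> l' show ?thesis unfolding propagation_def by blast
  qed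
qed

lemma bisim_propagation:
  assumes "lambda_graph G" and "is_query G Q" and "bisim G R" and "sym R" and "trans R"
    and "Q \<subseteq> R"
  shows "bisim G (propagation G Q)"
proof -
  have "propagation G Q \<subseteq> R"
    using assms(3,6) by (intro propagation_subset) (auto simp: bisim_def blind_bisim_def)
  then have "homogeneous G (propagation G Q)"
    using assms(3) unfolding bisim_def blind_bisim_def homogeneous_def by blast
  then show ?thesis
    using var_closed_propagation[OF assms] propagated_propagation
    unfolding bisim_def blind_bisim_def by blast
qed

lemma query_subset_nodes: "is_query G Q \<Longrightarrow> Q \<subseteq> nodes G \<times> nodes G"
  unfolding is_query_def is_root_def by fastforce

theorem mainTheorem2:
  fixes G :: "('n, 'a) lgraph" and Q :: "'n rel"
  assumes "lambda_graph G"
    and "is_query G Q"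
    and "\<exists>R. sharing_equiv G R \<and> Q \<subseteq> R"
  shows "sharing_equiv G (spreading G Q) \<and> Q \<subseteq> spreading G Q \<and>
         (\<forall>R. sharing_equiv G R \<and> Q \<subseteq> R \<longrightarrow> spreading G Q \<subseteq> R)"
proof -
  obtain R where R: "sharing_equiv G R" and "Q \<subseteq> R" using assms(3) by blast
  then have "bisim G R" and "equiv (nodes G) R" and "open_rel G R"
    by (auto simp: sharing_equiv_def)
  have pre: "pre_lgraph G" using assms(1) by (simp add: lambda_graph_def)
  have Q_nodes: "Q \<subseteq> nodes G \<times> nodes G" using assms(2) by (rule query_subset_nodes)
  have "bisim G (propagation G Q)"
    using assms(1,2) \<open>bisim G R\<close> _ _ \<open>Q \<subseteq> R\<close> by (rule bisim_propagation)
      (use \<open>equiv (nodes G) R\<close> in \<open>auto simp: equiv_def\<close>)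
  then have S_eq: "spreading G Q = equiv_closure (nodes G) (propagation G Q)"
    using pre Q_nodes by (intro spreading_eq_equiv_closure_propagation) (auto simp: bisim_def blind_bisim_def)
  have least: "spreading G Q \<subseteq> S" if "sharing_equiv G S" and "Q \<subseteq> S" for S
    using that by (intro spreading_least) (auto simp: sharing_equiv_def bisim_def blind_bisim_def)
  have "bisim G (spreading G Q)" and "equiv (nodes G) (spreading G Q)"
    unfolding S_eq using bisim_equiv_closure[OF pre \<open>bisim G (propagation G Q)\<close>]
      equiv_equiv_closure[OF propagation_subset_nodes[OF pre]] by blast+
  moreover have "open_rel G (spreading G Q)"
    using \<open>open_rel G R\<close> least[OF R \<open>Q \<subseteq> R\<close>] unfolding open_rel_def by blast
  moreover have "Q \<subseteq> spreading G Q"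
    unfolding S_eq using subset_propagation[OF Q_nodes] subset_equiv_closure by blast
  ultimately show ?thesis using least unfolding sharing_equiv_def by blast
qed

end
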